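(* Let $n\ge1$, let $H(\mathbf{q},\mathbf{p})=p^2/2-1/q$ on $\mathbb{R}^n\times\mathbb{R}^n$, and let $P_-=\{(\mathbf{q},\mathbf{p}):\mathbf{q}\neq\mathbf{o},\ H(\mathbf{q},\mathbf{p})<0\}$. On $P_-$ define $L_{ij}=q_ip_j-q_jp_i$ for $i,j=1,\dots,n$, the Lenz vector $\mathbf{K}=(p^2-1/q)\mathbf{q}-(\mathbf{q}\cdot\mathbf{p})\mathbf{p}$, and \[ L_{i(n+1)}=-L_{(n+1)i}=\frac{K_i}{\sqrt{-2H}}\quad(i=1,\dots,n),\qquad L_{(n+1)(n+1)}=0. \] Let $\Phi_{LS}:P_-\to T_-=\{(\mathbf{r},\mathbf{s})\in T^{\ast}S^n: \mathbf{r}\neq(0,\dots,0,1),\ \mathbf{s}\neq0\}$ be the Ligon--Schaaf map $\Phi_{LS}(\mathbf{q},\mathbf{p})=(\mathbf{r},\mathbf{s})$, where \[ \mathbf{r}=(\cos v_{n+1})\mathbf{u}+(\sin v_{n+1})\mathbf{v},\qquad \mathbf{s}=\frac{(-\sin v_{n+1})\mathbf{u}+(\cos v_{n+1})\mathbf{v}}{\sqrt{-2H}}, \] with \[ \mathbf{u}=\big(\sqrt{-2H}\,q\,\mathbf{p},\ qp^2-1\big),\qquad \mathbf{v}=\big(-\mathbf{q}/q+(\mathbf{q}\cdot\mathbf{p})\mathbf{p},\ -\sqrt{-2H}\,(\mathbf{q}\cdot\mathbf{p})\big)\in\mathbb{R}^{n+1}, \] and $v_{n+1}=-\sqrt{-2H}\,(\mathbf{q}\cdot\mathbf{p})$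 the last coordinate of $\mathbf{v}$. For $i,j=1,\dots,n+1$ let $M_{ij}=r_is_j-r_js_i$ be the components of angular momentum $\mathbf{r}\wedge\mathbf{s}$ on $\mathbb{R}^{n+1}\times\mathbb{R}^{n+1}$. Then \[ M_{ij}\circ\Phi_{LS}=L_{ij}\qquad\text{for all } i,j=1,\dots,n+1. \] In particular, on $P_-$ one has $\{L_{ij},L_{jk}\}=L_{ki}$, and $\{L_{ij},L_{kl}\}=0$ whenever $\#\{i,j,k,l\}\neq3$, for $i,j,k,l=1,\dots,n+1$; and $\Phi_{LS}$ intertwines the two infinitesimal Hamiltonian actions of $\mathfrak{so}(n+1)$ (generated by the $L_{ij}$ on $P_-$ and by the $M_{ij}$ on $T_-$).
   Context: Vectors are bold; $\mathbf{a}\cdot\mathbf{b}$ is the Euclidean inner product, $a^2=\mathbf{a}\cdot\mathbf{a}$, $q=|\mathbf{q}|$, and $\mathbf{o}$ is the origin. $T^{\ast}S^n$ is identified with $\{(\mathbf{r},\mathbf{s})\in\mathbb{R}^{n+1}\times\mathbb{R}^{n+1}:\mathbf{r}\cdot\mathbf{r}=1,\ \mathbf{r}\cdot\mathbf{s}=0\}$. The phase space $\mathbb{R}^n\times\mathbb{R}^n$ carries the symplectic form $\sum dq_k\wedge dp_k$ and Poisson bracket $\{f,g\}=\sum_k\big(\frac{\partial f}{\partial q_k}\frac{\partial g}{\partial p_k}-\frac{\partial f}{\partial p_k}\frac{\partial g}{\partial q_k}\big)$; similarly $T^{\ast}S^n$ carries the restriction of $\sum_{k=1}^{n+1}dr_k\wedge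 ds_k$. *)

theory Defs
  imports "HOL-Analysis.Analysis"
begin

text \<open>Vectors in R^m are represented as functions nat => real whose relevant
  coordinates are those with index in {1..m}; all operations below only read
  these coordinates.\<close>

definition dotp :: "nat \<Rightarrow> (nat \<Rightarrow> real) \<Rightarrow> (nat \<Rightarrow> real) \<Rightarrow> real" where
  "dotp m x y = (\<Sum>k=1..m. x k * y k)"

definition vnorm :: "nat \<Rightarrow> (nat \<Rightarrow> real) \<Rightarrow> real" where
  "vnorm m x = sqrt (dotp m x x)"

definition kepH :: "nat \<Rightarrow> (nat \<Rightarrow> real) \<Rightarrow> (nat \<Rightarrow> real) \<Rightarrow> real" where
  "kepH n q p = dotp n p p / 2 - 1 / vnorm n q"

definition Pminus :: "nat \<Rightarrow> ((nat \<Rightarrow> real) \<times> (nat \<Rightarrow> real)) set" where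
  "Pminus n = {(q, p). (\<exists>k\<in>{1..n}. q k \<noteq> 0) \<and> kepH n q p < 0}"

definition lenz :: "nat \<Rightarrow> (nat \<Rightarrow> real) \<Rightarrow> (nat \<Rightarrow> real) \<Rightarrow> nat \<Rightarrow> real" where
  "lenz n q p = (\<lambda>k. (dotp n p p - 1 / vnorm n q) * q k - dotp n q p * p k)"

definition Lfun :: "nat \<Rightarrow> nat \<Rightarrow> nat \<Rightarrow> (nat \<Rightarrow> real) \<Rightarrow> (nat \<Rightarrow> real) \<Rightarrow> real" where
  "Lfun n i j q p =
     (if i \<in> {1..n} \<and> j \<in> {1..n} then q i * p j - q j * p i
      else if i \<in> {1..n} \<and> j = n + 1 then lenz n q p i / sqrt (- 2 * kepH n q p)
      else if i = n + 1 \<and> j \<in> {1..n} then - (lenz n q p j / sqrt (- 2 * kepH n q p))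
      else 0)"

definition LSu :: "nat \<Rightarrow> (nat \<Rightarrow> real) \<Rightarrow> (nat \<Rightarrow> real) \<Rightarrow> nat \<Rightarrow> real" where
  "LSu n q p = (\<lambda>k. if k \<in> {1..n} then sqrt (- 2 * kepH n q p) * vnorm n q * p k
                    else if k = n + 1 then vnorm n q * dotp n p p - 1 else 0)"

definition LSv :: "nat \<Rightarrow> (nat \<Rightarrow> real) \<Rightarrow> (nat \<Rightarrow> real) \<Rightarrow> nat \<Rightarrow> real" where
  "LSv n q p = (\<lambda>k. if k \<in> {1..n} then - q k / vnorm n q + dotp n q p * p k
                    else if k = n + 1 then - sqrt (- 2 * kepH n q p) * dotp n q p else 0)"

definition LSmap :: "nat \<Rightarrow> (nat \<Rightarrow> real) \<Rightarrow> (nat \<Rightarrow> real) \<Rightarrow> (nat \<Rightarrow> real) \<times> (nat \<Rightarrow> real)" where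
  "LSmap n q p =
     (let u = LSu n q p; v = LSv n q p; \<theta> = v (n + 1); w = sqrt (- 2 * kepH n q p) in
      (\<lambda>k. cos \<theta> * u k + sin \<theta> * v k,
       \<lambda>k. (- sin \<theta> * u k + cos \<theta> * v k) / w))"

text \<open>T_- inside T^*S^n, viewed in R^{n+1} x R^{n+1} (coordinates 1..n+1).\<close>
definition Tminus :: "nat \<Rightarrow> ((nat \<Rightarrow> real) \<times> (nat \<Rightarrow> real)) set" where
  "Tminus n = {(r, s). dotp (n + 1) r r = 1 \<and> dotp (n + 1) r s = 0
                \<and> (\<exists>k\<in>{1..n+1}. r k \<noteq> (if k = n + 1 then 1 else 0))
                \<and> (\<exists>k\<in>{1..n+1}. s k \<noteq> 0)}"

definition Mfun :: "nat \<Rightarrow> nat \<Rightarrow> (nat \<Rightarrow> real) \<Rightarrow> (nat \<Rightarrow> real) \<Rightarrow> real" where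
  "Mfun i j r s = r i * s j - r j * s i"

definition pd1 :: "((nat \<Rightarrow> real) \<Rightarrow> (nat \<Rightarrow> real) \<Rightarrow> real) \<Rightarrow> nat \<Rightarrow> (nat \<Rightarrow> real) \<Rightarrow> (nat \<Rightarrow> real) \<Rightarrow> real" where
  "pd1 f k x y = deriv (\<lambda>t. f (x(k := x k + t)) y) 0"

definition pd2 :: "((nat \<Rightarrow> real) \<Rightarrow> (nat \<Rightarrow> real) \<Rightarrow> real) \<Rightarrow> nat \<Rightarrow> (nat \<Rightarrow> real) \<Rightarrow> (nat \<Rightarrow> real) \<Rightarrow> real" where
  "pd2 f k x y = deriv (\<lambda>t. f x (y(k := y k + t))) 0"

definition poisson :: "nat \<Rightarrow> ((nat \<Rightarrow> real) \<Rightarrow> (nat \<Rightarrow> real) \<Rightarrow> real)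
    \<Rightarrow> ((nat \<Rightarrow> real) \<Rightarrow> (nat \<Rightarrow> real) \<Rightarrow> real) \<Rightarrow> (nat \<Rightarrow> real) \<Rightarrow> (nat \<Rightarrow> real) \<Rightarrow> real" where
  "poisson m f g x y = (\<Sum>k=1..m. pd1 f k x y * pd2 g k x y - pd2 f k x y * pd1 g k x y)"

text \<open>Hamiltonian vector field X_f = (df/dy, -df/dx) of f on R^m x R^m
  (so that X_f g = {g,f}); components outside {1..m} are 0.\<close>
definition hamvf :: "nat \<Rightarrow> ((nat \<Rightarrow> real) \<Rightarrow> (nat \<Rightarrow> real) \<Rightarrow> real) \<Rightarrow> (nat \<Rightarrow> real) \<Rightarrow> (nat \<Rightarrow> real)
    \<Rightarrow> (nat \<Rightarrow> real) \<times> (nat \<Rightarrow> real)" where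
  "hamvf m f x y = ((\<lambda>k. if k \<in> {1..m} then pd2 f k x y else 0),
                    (\<lambda>k. if k \<in> {1..m} then - pd1 f k x y else 0))"

end

theory Submission
  imports Defs
begin

text \<open>On \<open>H < 0\<close> the vectors \<open>u\<close> and \<open>v\<close> form an orthonormal pair in \<open>\<real>\<^sup>n\<^sup>+\<^sup>1\<close>, and
  \<open>\<Phi>\<^sub>L\<^sub>S\<close> rotates this pair inside its own plane by the angle \<open>\<theta> = v\<^sub>n\<^sub>+\<^sub>1\<close>.  Hence
  \<open>r \<and> s = u \<and> v / \<surd>(-2H)\<close>, which a direct computation identifies with the \<open>L\<^sub>i\<^sub>j\<close>.
  Along the Hamiltonian vector field of \<open>L\<^sub>i\<^sub>j\<close> the factor \<open>\<surd>(-2H)\<close> is constant and the frame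
  \<open>(u, v)\<close> moves by the infinitesimal rotation \<open>e\<^sub>i \<and> e\<^sub>j\<close> plus a rotation within its own
  plane; the latter is cancelled exactly by the change of \<open>\<theta>\<close>, so \<open>d\<Phi>\<^sub>L\<^sub>S\<close> maps
  \<open>X\<^bsub>L\<^sub>i\<^sub>j\<^esub>\<close> to \<open>X\<^bsub>M\<^sub>i\<^sub>j\<^esub>\<close>.\<close>

definition unit_vec :: "nat \<Rightarrow> nat \<Rightarrow> real" where
  "unit_vec k = (\<lambda>a. if a = k then 1 else 0)"

text \<open>All gradients occurring below have the shape \<open>\<alpha> q + \<beta> p + \<gamma> e\<^sub>a + \<delta> e\<^sub>b\<close>, so their
  dot products reduce to \<open>q\<cdot>q\<close>, \<open>q\<cdot>p\<close>, \<open>p\<cdot>p\<close> and single coordinates.\<close>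
definition qp_comb ::
    "real \<Rightarrow> real \<Rightarrow> real \<Rightarrow> nat \<Rightarrow> real \<Rightarrow> nat \<Rightarrow> (nat \<Rightarrow> real) \<Rightarrow> (nat \<Rightarrow> real) \<Rightarrow> nat \<Rightarrow> real" where
  "qp_comb \<alpha> \<beta> \<gamma> a \<delta> b q p = (\<lambda>k. \<alpha> * q k + \<beta> * p k + \<gamma> * unit_vec a k + \<delta> * unit_vec b k)"

lemma unit_vec_self [simp]: "unit_vec k k = 1"
  by (simp add: unit_vec_def)

lemma unit_vec_other: "j \<noteq> k \<Longrightarrow> unit_vec j k = 0"
  by (simp add: unit_vec_def)

lemma unit_vec_commute: "unit_vec a b = unit_vec b a"
  by (simp add: unit_vec_def eq_commute)

lemma qp_comb_apply: "qp_comb \<alpha> \<beta> \<gamma> a \<delta> b q p k = \<alpha> * q k + \<beta> * p k + \<gamma> * unit_vec a k + \<delta> * unit_vec b k"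
  by (simp add: qp_comb_def)

lemma dotp_commute: "dotp n x y = dotp n y x"
  by (simp add: dotp_def mult.commute)

lemma dotp_zero_left [simp]: "dotp n (\<lambda>_. 0) y = 0"
  by (simp add: dotp_def)

lemma dotp_zero_right [simp]: "dotp n x (\<lambda>_. 0) = 0"
  by (simp add: dotp_def)

lemma dotp_last: "dotp (n + 1) x y = dotp n x y + x (n + 1) * y (n + 1)"
  by (simp add: dotp_def)

lemma dotp_cong: "(\<And>k. k \<in> {1..n} \<Longrightarrow> x k = x' k) \<Longrightarrow> (\<And>k. k \<in> {1..n} \<Longrightarrow> y k = y' k) \<Longrightarrow>
    dotp n x y = dotp n x' y'"
  unfolding dotp_def by (rule sum.cong) auto

lemma dotp_self_eq_vnorm_sq: "dotp n q q = vnorm n q ^ 2"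
  by (simp add: vnorm_def dotp_def sum_nonneg)

lemma vnorm_pos: "dotp n q q > 0 \<Longrightarrow> vnorm n q > 0"
  by (simp add: vnorm_def)

lemma dotp_pos_if_coord_nonzero:
  assumes "k \<in> {1..n}" "x k \<noteq> 0"
  shows "dotp n x x > 0"
proof -
  have "x k * x k \<le> dotp n x x"
    unfolding dotp_def by (rule member_le_sum) (use assms in auto)
  moreover have "x k * x k > 0" using assms(2) not_real_square_gt_zero by blast
  ultimately show ?thesis by linarith
qed

lemma sum_mult_unit_vec: "a \<in> {1..n} \<Longrightarrow> (\<Sum>k=1..n. f k * unit_vec a k) = f a"
  by (simp add: unit_vec_def if_distrib cong: if_cong)

lemma dotp_unit_vec: "a \<in> {1..n} \<Longrightarrow> dotp n x (unit_vec a) = x a"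
  unfolding dotp_def by (rule sum_mult_unit_vec)

lemma dotp_qp_comb:
  assumes "a \<in> {1..n}" "b \<in> {1..n}"
  shows "dotp n x (qp_comb \<alpha> \<beta> \<gamma> a \<delta> b q p) = \<alpha> * dotp n x q + \<beta> * dotp n x p + \<gamma> * x a + \<delta> * x b"
proof -
  have "dotp n x (qp_comb \<alpha> \<beta> \<gamma> a \<delta> b q p) = (\<Sum>k=1..n. \<alpha> * (x k * q k)) + (\<Sum>k=1..n. \<beta> * (x k * p k))
     + (\<Sum>k=1..n. \<gamma> * (x k * unit_vec a k)) + (\<Sum>k=1..n. \<delta> * (x k * unit_vec b k))"
    unfolding dotp_def qp_comb_def by (simp add: sum.distrib[symmetric] algebra_simps)
  also have "\<dots> = \<alpha> * dotp n x q + \<beta> * dotp n x p + \<gamma> * x a + \<delta> * x b"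
    using assms by (simp only: sum_distrib_left[symmetric] sum_mult_unit_vec dotp_def)
  finally show ?thesis .
qed

lemma sum_qp_comb_mult:
  assumes "a \<in> {1..n}" "b \<in> {1..n}" "c \<in> {1..n}" "e \<in> {1..n}"
  shows "(\<Sum>k=1..n. qp_comb \<alpha> \<beta> \<gamma> a \<delta> b q p k * qp_comb \<alpha>' \<beta>' \<gamma>' c \<delta>' e q p k) =
      \<alpha> * (\<alpha>' * dotp n q q + \<beta>' * dotp n q p + \<gamma>' * q c + \<delta>' * q e)
    + \<beta> * (\<alpha>' * dotp n q p + \<beta>' * dotp n p p + \<gamma>' * p c + \<delta>' * p e)
    + \<gamma> * (\<alpha>' * q a + \<beta>' * p a + \<gamma>' * unit_vec c a + \<delta>' * unit_vec e a)
    + \<delta> * (\<alpha>' * q b + \<beta>' * p b + \<gamma>' * unit_vec c b + \<delta>' * unit_vec e b)"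
proof -
  let ?y = "qp_comb \<alpha>' \<beta>' \<gamma>' c \<delta>' e q p"
  have "(\<Sum>k=1..n. qp_comb \<alpha> \<beta> \<gamma> a \<delta> b q p k * ?y k) = (\<Sum>k=1..n. \<alpha> * (q k * ?y k))
     + (\<Sum>k=1..n. \<beta> * (p k * ?y k)) + (\<Sum>k=1..n. \<gamma> * (?y k * unit_vec a k))
     + (\<Sum>k=1..n. \<delta> * (?y k * unit_vec b k))"
    unfolding qp_comb_def[of \<alpha>] by (simp add: sum.distrib[symmetric] algebra_simps)
  also have "\<dots> = \<alpha> * dotp n q ?y + \<beta> * dotp n p ?y + \<gamma> * ?y a + \<delta> * ?y b"
    using assms by (simp only: sum_distrib_left[symmetric] sum_mult_unit_vec dotp_def)
  also have "\<dots> = \<alpha> * (\<alpha>' * dotp n q q + \<beta>' * dotp n q p + \<gamma>' * q c + \<delta>' * q e)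
    + \<beta> * (\<alpha>' * dotp n q p + \<beta>' * dotp n p p + \<gamma>' * p c + \<delta>' * p e)
    + \<gamma> * (\<alpha>' * q a + \<beta>' * p a + \<gamma>' * unit_vec c a + \<delta>' * unit_vec e a)
    + \<delta> * (\<alpha>' * q b + \<beta>' * p b + \<gamma>' * unit_vec c b + \<delta>' * unit_vec e b)"
    using assms by (simp add: dotp_qp_comb dotp_commute[of n p q] qp_comb_apply)
  finally show ?thesis .
qed

lemma dotp_lin_comb:
  "dotp n (\<lambda>k. a * x k + b * y k) (\<lambda>k. c * x k + d * y k) =
    a * c * dotp n x x + (a * d + b * c) * dotp n x y + b * d * dotp n y y"
  unfolding dotp_def
  by (simp add: sum.distrib sum_distrib_left[symmetric] algebra_simps mult.commute[of "y _" "x _"])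

definition kepW :: "nat \<Rightarrow> (nat \<Rightarrow> real) \<Rightarrow> (nat \<Rightarrow> real) \<Rightarrow> real" where
  "kepW n q p = sqrt (- 2 * kepH n q p)"

lemma Pminus_D:
  assumes "(q, p) \<in> Pminus n"
  shows "dotp n q q > 0" "kepH n q p < 0"
  using assms dotp_pos_if_coord_nonzero unfolding Pminus_def by auto

lemma kepW_pos: "kepH n q p < 0 \<Longrightarrow> kepW n q p > 0"
  by (simp add: kepW_def)

lemma dotp_p_p_eq: "kepH n q p < 0 \<Longrightarrow> dotp n p p = 2 / vnorm n q - kepW n q p ^ 2"
  by (simp add: kepW_def kepH_def)

lemma lenz_eq: "kepH n q p < 0 \<Longrightarrow>
    lenz n q p a = (1 / vnorm n q - kepW n q p ^ 2) * q a - dotp n q p * p a"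
  by (simp add: lenz_def dotp_p_p_eq)

section \<open>The Ligon--Schaaf map and angular momentum\<close>

lemma LSu_coord: "k \<in> {1..n} \<Longrightarrow> LSu n q p k = kepW n q p * vnorm n q * p k"
  by (simp add: LSu_def kepW_def)

lemma LSv_coord: "k \<in> {1..n} \<Longrightarrow> LSv n q p k = - (1 / vnorm n q) * q k + dotp n q p * p k"
  by (simp add: LSv_def)

lemma LSu_last: "LSu n q p (n + 1) = vnorm n q * dotp n p p - 1"
  by (simp add: LSu_def)

lemma LSv_last: "LSv n q p (n + 1) = - kepW n q p * dotp n q p"
  by (simp add: LSv_def kepW_def)

lemma LSu_LSv_orthonormal:
  assumes "dotp n q q > 0" "kepH n q p < 0"
  shows "dotp (n + 1) (LSu n q p) (LSu n q p) = 1"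
    and "dotp (n + 1) (LSv n q p) (LSv n q p) = 1"
    and "dotp (n + 1) (LSu n q p) (LSv n q p) = 0"
proof -
  have Q: "vnorm n q > 0" using vnorm_pos assms(1) .
  let ?u = "\<lambda>k. 0 * q k + kepW n q p * vnorm n q * p k"
  let ?v = "\<lambda>k. - (1 / vnorm n q) * q k + dotp n q p * p k"
  have restrict: "dotp n (LSu n q p) (LSu n q p) = dotp n ?u ?u"
    "dotp n (LSv n q p) (LSv n q p) = dotp n ?v ?v" "dotp n (LSu n q p) (LSv n q p) = dotp n ?u ?v"
    by (intro dotp_cong; simp add: LSu_coord LSv_coord)+
  note sub = dotp_lin_comb dotp_self_eq_vnorm_sq[of n q] dotp_p_p_eq[OF assms(2)] dotp_commute[of n p q]
    LSu_last LSv_last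
  show "dotp (n + 1) (LSu n q p) (LSu n q p) = 1"
    unfolding dotp_last restrict sub using Q by (simp add: field_simps power2_eq_square)
  show "dotp (n + 1) (LSv n q p) (LSv n q p) = 1"
    unfolding dotp_last restrict sub using Q by (simp add: field_simps power2_eq_square)
  show "dotp (n + 1) (LSu n q p) (LSv n q p) = 0"
    unfolding dotp_last restrict sub using Q by (simp add: field_simps power2_eq_square)
qed

lemma sin_eq_self_iff: "sin x = x \<longleftrightarrow> x = (0::real)"
proof
  assume sin_x: "sin x = x"
  have dbl: "sin x = 2 * sin (x / 2) * cos (x / 2)"
    using sin_double[of "x / 2"] by simp
  show "x = 0"
  proof (rule ccontr)
    assume "x \<noteq> 0"
    have "\<bar>x\<bar> = \<bar>sin x\<bar>" using sin_x by simp
    also have "\<dots> = 2 * \<bar>sin (x / 2)\<bar> * \<bar>cos (x / 2)\<bar>"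
      unfolding dbl by (simp add: abs_mult)
    also have "\<dots> \<le> \<bar>x\<bar> * \<bar>cos (x / 2)\<bar>"
      using abs_sin_x_le_abs_x[of "x / 2"] by (simp add: mult_right_mono)
    finally have "\<bar>cos (x / 2)\<bar> = 1"
      using \<open>x \<noteq> 0\<close> abs_cos_le_one[of "x / 2"] by simp
    then have "cos (x / 2) ^ 2 = 1" by (metis power2_abs power_one)
    then have "sin (x / 2) = 0"
      using sin_cos_squared_add[of "x / 2"] by simp
    then have "sin x = 0" unfolding dbl by simp
    with sin_x \<open>x \<noteq> 0\<close> show False by simp
  qed
qed simp

lemma LSmap_fst: "fst (LSmap n q p) =
    (\<lambda>k. cos (LSv n q p (n + 1)) * LSu n q p k + sin (LSv n q p (n + 1)) * LSv n q p k)"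
  by (simp add: LSmap_def Let_def)

lemma LSmap_snd: "snd (LSmap n q p) =
    (\<lambda>k. (- sin (LSv n q p (n + 1)) / kepW n q p) * LSu n q p k
       + (cos (LSv n q p (n + 1)) / kepW n q p) * LSv n q p k)"
  by (simp add: LSmap_def Let_def kepW_def add_divide_distrib diff_divide_distrib)

text \<open>If \<open>r\<close> were the north pole, then \<open>s\<^sub>n\<^sub>+\<^sub>1 = 0\<close> and undoing the rotation would give
  \<open>\<theta> = v\<^sub>n\<^sub>+\<^sub>1 = sin \<theta>\<close>, hence \<open>\<theta> = 0\<close> and \<open>r = u\<close>; but \<open>u\<close> is the north pole only if
  \<open>p = 0\<close>, and then \<open>u\<^sub>n\<^sub>+\<^sub>1 = -1\<close>.\<close>
lemma LSmap_in_Tminus: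
  assumes "(q, p) \<in> Pminus n"
  shows "LSmap n q p \<in> Tminus n"
proof -
  note pm = Pminus_D[OF assms]
  define \<theta> where "\<theta> = LSv n q p (n + 1)"
  define W where "W = kepW n q p"
  define r where "r = fst (LSmap n q p)"
  define s where "s = snd (LSmap n q p)"
  have W: "W > 0" using kepW_pos[OF pm(2)] by (simp add: W_def)
  have r: "r = (\<lambda>k. cos \<theta> * LSu n q p k + sin \<theta> * LSv n q p k)"
    and s: "s = (\<lambda>k. (- sin \<theta> / W) * LSu n q p k + (cos \<theta> / W) * LSv n q p k)"
    by (simp_all add: r_def s_def LSmap_fst LSmap_snd \<theta>_def W_def)
  note orth = LSu_LSv_orthonormal[OF pm] dotp_commute[of "n + 1" "LSv n q p" "LSu n q p"]
  have rr: "dotp (n + 1) r r = 1"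
    unfolding r dotp_lin_comb orth by (simp add: sin_cos_squared_add3)
  have rs: "dotp (n + 1) r s = 0"
    unfolding r s dotp_lin_comb orth by (simp add: algebra_simps)
  have "dotp (n + 1) s s = (sin \<theta> ^ 2 + cos \<theta> ^ 2) / W ^ 2"
    unfolding s dotp_lin_comb orth using W by (simp add: field_simps power2_eq_square)
  then have ss: "dotp (n + 1) s s = 1 / W ^ 2" by simp
  have s_nonzero: "\<exists>k\<in>{1..n+1}. s k \<noteq> 0"
  proof (rule ccontr)
    assume "\<not> ?thesis"
    then have "dotp (n + 1) s s = 0" by (simp add: dotp_def)
    with ss W show False by simp
  qed
  have r_not_pole: "\<exists>k\<in>{1..n+1}. r k \<noteq> (if k = n + 1 then 1 else 0)"
  proof (rule ccontr)
    assume "\<not> ?thesis"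
    then have r0: "r k = 0" if "k \<in> {1..n}" for k
      using that by force
    from \<open>\<not> ?thesis\<close> have r1: "r (n + 1) = 1" by force
    have "s (n + 1) = dotp (n + 1) r s"
      using r1 by (simp add: dotp_last dotp_def r0)
    then have "s (n + 1) = 0" using rs by simp
    moreover have "LSv n q p (n + 1) = sin \<theta> * r (n + 1) + cos \<theta> * W * s (n + 1)"
      using W by (simp add: r s field_simps) (use sin_cos_squared_add3[of \<theta>] in algebra)
    ultimately have "\<theta> = 0" using r1 sin_eq_self_iff[of \<theta>] by (simp add: \<theta>_def)
    then have "LSu n q p k = 0" if "k \<in> {1..n}" for k
      using r0[OF that] by (simp add: r)
    then have "p k = 0" if "k \<in> {1..n}" for k
      using that W vnorm_pos[OF pm(1)] by (simp add: LSu_coord W_def)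
    then have "dotp n p p = 0" by (simp add: dotp_def)
    then show False using r1 \<open>\<theta> = 0\<close> by (simp add: r LSu_def)
  qed
  have "LSmap n q p = (r, s)" by (simp add: r_def s_def)
  with rr rs r_not_pole s_nonzero show ?thesis
    by (simp add: Tminus_def)
qed

lemma Lfun_swap: "Lfun n j i q p = - Lfun n i j q p"
  by (auto simp: Lfun_def)

lemma Lfun_diag: "Lfun n i i q p = 0"
  by (auto simp: Lfun_def)

text \<open>The rotation by \<open>\<theta>\<close> in the plane of \<open>u\<close> and \<open>v\<close> leaves \<open>u \<and> v\<close> unchanged.\<close>
lemma Mfun_LSmap:
  assumes "kepH n q p < 0"
  shows "Mfun i j (fst (LSmap n q p)) (snd (LSmap n q p)) =
    (LSu n q p i * LSv n q p j - LSu n q p j * LSv n q p i) / kepW n q p"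
proof -
  define c where "c = cos (LSv n q p (n + 1))"
  define s where "s = sin (LSv n q p (n + 1))"
  have "Mfun i j (fst (LSmap n q p)) (snd (LSmap n q p)) =
    (c * c + s * s) * (LSu n q p i * LSv n q p j - LSu n q p j * LSv n q p i) / kepW n q p"
    unfolding Mfun_def LSmap_fst LSmap_snd c_def[symmetric] s_def[symmetric]
    using kepW_pos[OF assms] by (simp add: field_simps)
  then show ?thesis by (simp add: c_def s_def)
qed

lemma LSu_LSv_wedge_eq_Lfun:
  assumes "dotp n q q > 0" "kepH n q p < 0" "i \<in> {1..n+1}" "j \<in> {1..n+1}"
  shows "(LSu n q p i * LSv n q p j - LSu n q p j * LSv n q p i) / kepW n q p = Lfun n i j q p"
proof -
  have Q: "vnorm n q > 0" using vnorm_pos assms(1) .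
  have W: "kepW n q p > 0" using kepW_pos assms(2) .
  note sub = LSu_coord LSv_coord LSu_last[simplified] LSv_last[simplified]
    dotp_p_p_eq[OF assms(2)] lenz_eq[OF assms(2)]
  have first_le_n: "(LSu n q p a * LSv n q p b - LSu n q p b * LSv n q p a) / kepW n q p = Lfun n a b q p"
    if "a \<in> {1..n}" "b \<in> {1..n+1}" for a b
  proof (cases "b = n + 1")
    case True
    with that Q W show ?thesis
      unfolding Lfun_def kepW_def[symmetric] by (simp add: sub field_simps power2_eq_square)
  next
    case False
    with that Q W show ?thesis
      unfolding Lfun_def kepW_def[symmetric] by (simp add: sub field_simps)
  qed
  consider "i \<in> {1..n}" | "j \<in> {1..n}" | "i = n + 1" "j = n + 1"
    using assms(3,4) by fastforce
  then show ?thesis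
  proof cases
    case 1
    then show ?thesis using first_le_n assms(4) by blast
  next
    case 2
    have "(LSu n q p i * LSv n q p j - LSu n q p j * LSv n q p i) / kepW n q p =
        - ((LSu n q p j * LSv n q p i - LSu n q p i * LSv n q p j) / kepW n q p)"
      by (simp add: minus_divide_left)
    also have "\<dots> = Lfun n i j q p"
      using first_le_n[of j i] 2 assms(3) Lfun_swap[of n i j] by simp
    finally show ?thesis .
  next
    case 3
    then show ?thesis by (simp add: Lfun_diag)
  qed
qed

lemma Mfun_LSmap_eq_Lfun:
  assumes "(q, p) \<in> Pminus n" "i \<in> {1..n+1}" "j \<in> {1..n+1}"
  shows "Mfun i j (fst (LSmap n q p)) (snd (LSmap n q p)) = Lfun n i j q p"
  using Mfun_LSmap LSu_LSv_wedge_eq_Lfun Pminus_D[OF assms(1)] assms(2,3) by metis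

section \<open>Derivatives along straight lines\<close>

definition line :: "(nat \<Rightarrow> real) \<Rightarrow> (nat \<Rightarrow> real) \<Rightarrow> real \<Rightarrow> nat \<Rightarrow> real" where
  "line x dx t = (\<lambda>a. x a + t * dx a)"

lemma line_0 [simp]: "line x dx 0 = x"
  by (simp add: line_def)

lemma DERIV_line_coord: "((\<lambda>t. line x dx t m) has_real_derivative dx m) (at 0)"
  unfolding line_def by (auto intro!: derivative_eq_intros)

lemma DERIV_dotp_line:
  "((\<lambda>t. dotp n (line x dx t) (line y dy t)) has_real_derivative dotp n dx y + dotp n x dy) (at 0)"
  unfolding dotp_def line_def
  by (auto intro!: derivative_eq_intros simp: sum.distrib[symmetric] algebra_simps)

definition d_vnorm :: "nat \<Rightarrow> (nat \<Rightarrow> real) \<Rightarrow> (nat \<Rightarrow> real) \<Rightarrow> real" where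
  "d_vnorm n q dq = dotp n q dq / vnorm n q"

definition d_qp :: "nat \<Rightarrow> (nat \<Rightarrow> real) \<Rightarrow> (nat \<Rightarrow> real) \<Rightarrow> (nat \<Rightarrow> real) \<Rightarrow> (nat \<Rightarrow> real) \<Rightarrow> real" where
  "d_qp n q p dq dp = dotp n dq p + dotp n q dp"

definition d_kepW :: "nat \<Rightarrow> (nat \<Rightarrow> real) \<Rightarrow> (nat \<Rightarrow> real) \<Rightarrow> (nat \<Rightarrow> real) \<Rightarrow> (nat \<Rightarrow> real) \<Rightarrow> real" where
  "d_kepW n q p dq dp = - (dotp n p dp + d_vnorm n q dq / vnorm n q ^ 2) / kepW n q p"

definition d_LSu :: "nat \<Rightarrow> (nat \<Rightarrow> real) \<Rightarrow> (nat \<Rightarrow> real) \<Rightarrow> (nat \<Rightarrow> real) \<Rightarrow> (nat \<Rightarrow> real) \<Rightarrow> nat \<Rightarrow> real" where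
  "d_LSu n q p dq dp m =
    (if m \<in> {1..n} then d_kepW n q p dq dp * vnorm n q * p m + kepW n q p * d_vnorm n q dq * p m
       + kepW n q p * vnorm n q * dp m
     else if m = n + 1 then d_vnorm n q dq * dotp n p p + vnorm n q * (2 * dotp n p dp) else 0)"

definition d_LSv :: "nat \<Rightarrow> (nat \<Rightarrow> real) \<Rightarrow> (nat \<Rightarrow> real) \<Rightarrow> (nat \<Rightarrow> real) \<Rightarrow> (nat \<Rightarrow> real) \<Rightarrow> nat \<Rightarrow> real" where
  "d_LSv n q p dq dp m =
    (if m \<in> {1..n} then - (dq m * vnorm n q - q m * d_vnorm n q dq) / vnorm n q ^ 2
       + d_qp n q p dq dp * p m + dotp n q p * dp m
     else if m = n + 1 then - (d_kepW n q p dq dp * dotp n q p + kepW n q p * d_qp n q p dq dp) else 0)"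

lemma DERIV_sqrt_at0:
  assumes "(f has_real_derivative D) (at 0)" "f 0 > 0"
  shows "((\<lambda>t. sqrt (f t)) has_real_derivative D / (2 * sqrt (f 0))) (at 0)"
  using DERIV_chain2[OF DERIV_real_sqrt[OF assms(2)] assms(1)] by (simp add: field_simps)

lemma DERIV_vnorm_line:
  assumes "dotp n q q > 0"
  shows "((\<lambda>t. vnorm n (line q dq t)) has_real_derivative d_vnorm n q dq) (at 0)"
  using DERIV_sqrt_at0[OF DERIV_dotp_line[of n q dq q dq]] assms
  unfolding vnorm_def d_vnorm_def by (simp add: dotp_commute[of n dq q])

lemma DERIV_inverse_vnorm_line:
  assumes "dotp n q q > 0"
  shows "((\<lambda>t. 1 / vnorm n (line q dq t)) has_real_derivative - d_vnorm n q dq / vnorm n q ^ 2) (at 0)"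
  using DERIV_divide[OF DERIV_const[of 1] DERIV_vnorm_line[OF assms]] vnorm_pos[OF assms]
  by (simp add: power2_eq_square)

lemma DERIV_kepW_line:
  assumes "dotp n q q > 0" "kepH n q p < 0"
  shows "((\<lambda>t. kepW n (line q dq t) (line p dp t)) has_real_derivative d_kepW n q p dq dp) (at 0)"
proof -
  have "((\<lambda>t. - 2 * kepH n (line q dq t) (line p dp t)) has_real_derivative
      - 2 * ((dotp n dp p + dotp n p dp) / 2 - - d_vnorm n q dq / vnorm n q ^ 2)) (at 0)"
    unfolding kepH_def
    by (intro DERIV_cmult DERIV_diff DERIV_cdivide DERIV_dotp_line DERIV_inverse_vnorm_line assms)
  from DERIV_sqrt_at0[OF this] assms(2) show ?thesis
    unfolding kepW_def d_kepW_def
    by (simp add: dotp_commute[of n dp p]) (rule DERIV_cong, simp, simp add: field_simps)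
qed

lemma DERIV_LSu_line:
  assumes "dotp n q q > 0" "kepH n q p < 0"
  shows "((\<lambda>t. LSu n (line q dq t) (line p dp t) m) has_real_derivative d_LSu n q p dq dp m) (at 0)"
proof -
  consider "m \<in> {1..n}" | "m = n + 1" | "m \<notin> {1..n}" "m \<noteq> n + 1" by blast
  then show ?thesis
  proof cases
    case 1
    have "((\<lambda>t. kepW n (line q dq t) (line p dp t) * vnorm n (line q dq t) * line p dp t m)
        has_real_derivative (d_kepW n q p dq dp * vnorm n q + d_vnorm n q dq * kepW n q p) * p m
          + dp m * (kepW n q p * vnorm n q)) (at 0)"
      using DERIV_mult[OF DERIV_mult[OF DERIV_kepW_line[OF assms] DERIV_vnorm_line[OF assms(1)]]
          DERIV_line_coord] by simp
    then show ?thesis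
      using 1 unfolding LSu_def d_LSu_def kepW_def[symmetric]
      by (simp cong: if_cong) (rule DERIV_cong, simp, simp add: algebra_simps)
  next
    case 2
    have "((\<lambda>t. vnorm n (line q dq t) * dotp n (line p dp t) (line p dp t) - 1) has_real_derivative
        d_vnorm n q dq * dotp n p p + (dotp n dp p + dotp n p dp) * vnorm n q - 0) (at 0)"
      using DERIV_diff[OF DERIV_mult[OF DERIV_vnorm_line[OF assms(1)] DERIV_dotp_line] DERIV_const]
      by simp
    then show ?thesis
      using 2 unfolding LSu_def d_LSu_def
      by (simp cong: if_cong) (rule DERIV_cong, simp, simp add: algebra_simps dotp_commute[of n dp p])
  next
    case 3
    then have "(\<lambda>t. LSu n (line q dq t) (line p dp t) m) = (\<lambda>t. 0)" by (auto simp: LSu_def)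
    with 3 show ?thesis by (auto simp: d_LSu_def)
  qed
qed

lemma DERIV_LSv_line:
  assumes "dotp n q q > 0" "kepH n q p < 0"
  shows "((\<lambda>t. LSv n (line q dq t) (line p dp t) m) has_real_derivative d_LSv n q p dq dp m) (at 0)"
proof -
  have Q: "vnorm n q > 0" using vnorm_pos assms(1) .
  consider "m \<in> {1..n}" | "m = n + 1" | "m \<notin> {1..n}" "m \<noteq> n + 1" by blast
  then show ?thesis
  proof cases
    case 1
    have "((\<lambda>t. - line q dq t m / vnorm n (line q dq t)
          + dotp n (line q dq t) (line p dp t) * line p dp t m) has_real_derivative
        - ((dq m * vnorm n q - q m * d_vnorm n q dq) / (vnorm n q * vnorm n q))
          + (d_qp n q p dq dp * p m + dp m * dotp n q p)) (at 0)"
      using DERIV_add[OF DERIV_minus[OF DERIV_divide[OF DERIV_line_coord DERIV_vnorm_line[OF assms(1)]]]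
          DERIV_mult[OF DERIV_dotp_line DERIV_line_coord]] Q
      by (simp add: d_qp_def)
    then show ?thesis
      using 1 Q unfolding LSv_def d_LSv_def
      by (simp cong: if_cong) (rule DERIV_cong, simp, simp add: field_simps power2_eq_square)
  next
    case 2
    have "((\<lambda>t. - kepW n (line q dq t) (line p dp t) * dotp n (line q dq t) (line p dp t))
        has_real_derivative - (d_kepW n q p dq dp * dotp n q p + d_qp n q p dq dp * kepW n q p)) (at 0)"
      using DERIV_minus[OF DERIV_mult[OF DERIV_kepW_line[OF assms] DERIV_dotp_line]]
      by (simp add: d_qp_def)
    then show ?thesis
      using 2 unfolding LSv_def d_LSv_def kepW_def[symmetric]
      by (simp cong: if_cong) (rule DERIV_cong, simp, simp add: algebra_simps)
  next
    case 3
    then have "(\<lambda>t. LSv n (line q dq t) (line p dp t) m) = (\<lambda>t. 0)" by (auto simp: LSv_def)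
    with 3 show ?thesis by (auto simp: d_LSv_def)
  qed
qed

text \<open>The gradient of \<open>c K\<^sub>a / \<surd>(-2H)\<close> with respect to \<open>q\<close> and \<open>p\<close>.\<close>
definition lenz_grad_q :: "nat \<Rightarrow> (nat \<Rightarrow> real) \<Rightarrow> (nat \<Rightarrow> real) \<Rightarrow> real \<Rightarrow> nat \<Rightarrow> nat \<Rightarrow> real" where
  "lenz_grad_q n q p c a = qp_comb
     (c * (q a / (vnorm n q ^ 3 * kepW n q p) + lenz n q p a / (vnorm n q ^ 3 * kepW n q p ^ 3)))
     (c * (- p a / kepW n q p)) (c * ((dotp n p p - 1 / vnorm n q) / kepW n q p)) a 0 a q p"

definition lenz_grad_p :: "nat \<Rightarrow> (nat \<Rightarrow> real) \<Rightarrow> (nat \<Rightarrow> real) \<Rightarrow> real \<Rightarrow> nat \<Rightarrow> nat \<Rightarrow> real" where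
  "lenz_grad_p n q p c a = qp_comb (c * (- p a / kepW n q p))
     (c * (2 * q a / kepW n q p + lenz n q p a / kepW n q p ^ 3)) (c * (- dotp n q p / kepW n q p)) a 0 a q p"

definition ang_grad_q :: "(nat \<Rightarrow> real) \<Rightarrow> (nat \<Rightarrow> real) \<Rightarrow> nat \<Rightarrow> nat \<Rightarrow> nat \<Rightarrow> real" where
  "ang_grad_q q p a b = qp_comb 0 0 (p b) a (- p a) b q p"

definition ang_grad_p :: "(nat \<Rightarrow> real) \<Rightarrow> (nat \<Rightarrow> real) \<Rightarrow> nat \<Rightarrow> nat \<Rightarrow> nat \<Rightarrow> real" where
  "ang_grad_p q p a b = qp_comb 0 0 (q a) b (- q b) a q p"

definition Lgrad_q :: "nat \<Rightarrow> (nat \<Rightarrow> real) \<Rightarrow> (nat \<Rightarrow> real) \<Rightarrow> nat \<Rightarrow> nat \<Rightarrow> nat \<Rightarrow> real" where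
  "Lgrad_q n q p a b =
    (if a \<in> {1..n} \<and> b \<in> {1..n} then ang_grad_q q p a b
     else if a \<in> {1..n} \<and> b = n + 1 then lenz_grad_q n q p 1 a
     else if a = n + 1 \<and> b \<in> {1..n} then lenz_grad_q n q p (-1) b else (\<lambda>k. 0))"

definition Lgrad_p :: "nat \<Rightarrow> (nat \<Rightarrow> real) \<Rightarrow> (nat \<Rightarrow> real) \<Rightarrow> nat \<Rightarrow> nat \<Rightarrow> nat \<Rightarrow> real" where
  "Lgrad_p n q p a b =
    (if a \<in> {1..n} \<and> b \<in> {1..n} then ang_grad_p q p a b
     else if a \<in> {1..n} \<and> b = n + 1 then lenz_grad_p n q p 1 a
     else if a = n + 1 \<and> b \<in> {1..n} then lenz_grad_p n q p (-1) b else (\<lambda>k. 0))"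

lemma DERIV_lenz_line:
  assumes "dotp n q q > 0"
  shows "((\<lambda>t. lenz n (line q dq t) (line p dp t) i) has_real_derivative
    (2 * dotp n p dp + d_vnorm n q dq / vnorm n q ^ 2) * q i + (dotp n p p - 1 / vnorm n q) * dq i
     - (d_qp n q p dq dp * p i + dotp n q p * dp i)) (at 0)"
proof -
  have "((\<lambda>t. (dotp n (line p dp t) (line p dp t) - 1 / vnorm n (line q dq t)) * line q dq t i
       - dotp n (line q dq t) (line p dp t) * line p dp t i) has_real_derivative
     ((dotp n dp p + dotp n p dp) - - d_vnorm n q dq / vnorm n q ^ 2) * q i
       + dq i * (dotp n p p - 1 / vnorm n q) - ((dotp n dq p + dotp n q dp) * p i + dp i * dotp n q p)) (at 0)"
    using DERIV_diff[OF DERIV_mult[OF DERIV_diff[OF DERIV_dotp_line DERIV_inverse_vnorm_line[OF assms]]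
        DERIV_line_coord] DERIV_mult[OF DERIV_dotp_line DERIV_line_coord]]
    by simp
  then show ?thesis unfolding lenz_def
    by (rule DERIV_cong) (simp add: d_qp_def dotp_commute[of n dp p] algebra_simps)
qed

lemma DERIV_lenz_over_kepW_line:
  assumes "dotp n q q > 0" "kepH n q p < 0" "a \<in> {1..n}"
  shows "((\<lambda>t. lenz n (line q dq t) (line p dp t) a / kepW n (line q dq t) (line p dp t))
    has_real_derivative dotp n dq (lenz_grad_q n q p 1 a) + dotp n dp (lenz_grad_p n q p 1 a)) (at 0)"
proof -
  have Q: "vnorm n q > 0" using vnorm_pos assms(1) .
  have W: "kepW n q p > 0" using kepW_pos assms(2) .
  show ?thesis
    by (rule DERIV_cong[OF DERIV_divide[OF DERIV_lenz_line[OF assms(1)] DERIV_kepW_line[OF assms(1,2)]]])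
      (use Q W assms(3) in \<open>simp_all add: lenz_grad_q_def lenz_grad_p_def d_kepW_def d_vnorm_def
        d_qp_def dotp_qp_comb field_simps dotp_commute[of n dp p] dotp_commute[of n dq q]
        dotp_commute[of n dp q] power2_eq_square power3_eq_cube\<close>)
qed

lemma dotp_lenz_grad_q_scale: "a \<in> {1..n} \<Longrightarrow> dotp n x (lenz_grad_q n q p c a) = c * dotp n x (lenz_grad_q n q p 1 a)"
  by (simp add: lenz_grad_q_def dotp_qp_comb algebra_simps)

lemma dotp_lenz_grad_p_scale: "a \<in> {1..n} \<Longrightarrow> dotp n x (lenz_grad_p n q p c a) = c * dotp n x (lenz_grad_p n q p 1 a)"
  by (simp add: lenz_grad_p_def dotp_qp_comb algebra_simps)

lemma DERIV_Lfun_line: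
  assumes "dotp n q q > 0" "kepH n q p < 0" "a \<in> {1..n+1}" "b \<in> {1..n+1}"
  shows "((\<lambda>t. Lfun n a b (line q dq t) (line p dp t)) has_real_derivative
    dotp n dq (Lgrad_q n q p a b) + dotp n dp (Lgrad_p n q p a b)) (at 0)"
proof -
  note lenz = DERIV_lenz_over_kepW_line[OF assms(1,2), unfolded kepW_def]
  consider "a \<in> {1..n}" "b \<in> {1..n}" | "a \<in> {1..n}" "b = n + 1" | "a = n + 1" "b \<in> {1..n}"
    | "a = n + 1" "b = n + 1"
    using assms(3,4) by fastforce
  then show ?thesis
  proof cases
    case 1
    have "((\<lambda>t. line q dq t a * line p dp t b - line q dq t b * line p dp t a) has_real_derivative
       (dq a * p b + dp b * q a) - (dq b * p a + dp a * q b)) (at 0)"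
      using DERIV_diff[OF DERIV_mult[OF DERIV_line_coord DERIV_line_coord]
          DERIV_mult[OF DERIV_line_coord DERIV_line_coord]] by simp
    with 1 show ?thesis
      unfolding Lfun_def Lgrad_q_def Lgrad_p_def ang_grad_q_def ang_grad_p_def
      by (simp add: dotp_qp_comb) (rule DERIV_cong, simp, simp add: algebra_simps)
  next
    case 2
    then show ?thesis using lenz[OF 2(1)] unfolding Lfun_def Lgrad_q_def Lgrad_p_def by simp
  next
    case 3
    then show ?thesis
      using DERIV_minus[OF lenz[OF 3(2)]] unfolding Lfun_def Lgrad_q_def Lgrad_p_def
      by (simp add: dotp_lenz_grad_q_scale[of b n _ _ _ "-1"] dotp_lenz_grad_p_scale[of b n _ _ _ "-1"])
  next
    case 4
    then show ?thesis unfolding Lfun_def Lgrad_q_def Lgrad_p_def by simp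
  qed
qed

lemma pd1_eq_deriv_line: "pd1 f k x y = deriv (\<lambda>t. f (line x (unit_vec k) t) (line y (\<lambda>_. 0) t)) 0"
proof -
  have "x(k := x k + t) = line x (unit_vec k) t" "line y (\<lambda>_. 0) t = y" for t
    by (auto simp: line_def unit_vec_def)
  then show ?thesis unfolding pd1_def by simp
qed

lemma pd2_eq_deriv_line: "pd2 f k x y = deriv (\<lambda>t. f (line x (\<lambda>_. 0) t) (line y (unit_vec k) t)) 0"
proof -
  have "y(k := y k + t) = line y (unit_vec k) t" "line x (\<lambda>_. 0) t = x" for t
    by (auto simp: line_def unit_vec_def)
  then show ?thesis unfolding pd2_def by simp
qed

lemma pd_Lfun:
  assumes "dotp n q q > 0" "kepH n q p < 0" "a \<in> {1..n+1}" "b \<in> {1..n+1}" "k \<in> {1..n}"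
  shows "pd1 (Lfun n a b) k q p = Lgrad_q n q p a b k"
    and "pd2 (Lfun n a b) k q p = Lgrad_p n q p a b k"
  using DERIV_imp_deriv[OF DERIV_Lfun_line[OF assms(1-4), of "unit_vec k" "\<lambda>_. 0"]]
    DERIV_imp_deriv[OF DERIV_Lfun_line[OF assms(1-4), of "\<lambda>_. 0" "unit_vec k"]] assms(5)
  by (simp_all add: pd1_eq_deriv_line pd2_eq_deriv_line dotp_commute[of n "unit_vec k"] dotp_unit_vec)

section \<open>Poisson brackets of the \<open>L\<^sub>i\<^sub>j\<close>\<close>

text \<open>\<open>L\<close> evaluated on the commutator of the generators \<open>e\<^sub>a \<and> e\<^sub>b\<close> and \<open>e\<^sub>c \<and> e\<^sub>d\<close> of \<open>so(n+1)\<close>.\<close>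
definition Lfun_commutator :: "nat \<Rightarrow> (nat \<Rightarrow> real) \<Rightarrow> (nat \<Rightarrow> real) \<Rightarrow> nat \<Rightarrow> nat \<Rightarrow> nat \<Rightarrow> nat \<Rightarrow> real" where
  "Lfun_commutator n q p a b c d =
     - unit_vec b c * Lfun n a d q p + unit_vec a c * Lfun n b d q p
     + unit_vec b d * Lfun n a c q p - unit_vec a d * Lfun n b c q p"

lemma Lfun_commutator_swap_left: "Lfun_commutator n q p b a c d = - Lfun_commutator n q p a b c d"
  by (simp add: Lfun_commutator_def)

lemma Lfun_commutator_swap_pairs: "Lfun_commutator n q p c d a b = - Lfun_commutator n q p a b c d"
  by (simp add: Lfun_commutator_def unit_vec_commute Lfun_swap[of n c b] Lfun_swap[of n d b]
      Lfun_swap[of n c a] Lfun_swap[of n d a])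

lemma lenz_grad_q_neg: "lenz_grad_q n q p (- c) a k = - lenz_grad_q n q p c a k"
  by (simp add: lenz_grad_q_def qp_comb_apply algebra_simps diff_divide_distrib add_divide_distrib)

lemma lenz_grad_p_neg: "lenz_grad_p n q p (- c) a k = - lenz_grad_p n q p c a k"
  by (simp add: lenz_grad_p_def qp_comb_apply algebra_simps diff_divide_distrib add_divide_distrib)

lemma Lgrad_q_swap: "Lgrad_q n q p b a k = - Lgrad_q n q p a b k"
  by (auto simp: Lgrad_q_def ang_grad_q_def qp_comb_apply lenz_grad_q_neg[of n q p 1, simplified])

lemma Lgrad_p_swap: "Lgrad_p n q p b a k = - Lgrad_p n q p a b k"
  by (auto simp: Lgrad_p_def ang_grad_p_def qp_comb_apply lenz_grad_p_neg[of n q p 1, simplified])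

lemma poisson_Lfun_eq_grad:
  assumes "dotp n q q > 0" "kepH n q p < 0" "a \<in> {1..n+1}" "b \<in> {1..n+1}" "c \<in> {1..n+1}" "d \<in> {1..n+1}"
  shows "poisson n (Lfun n a b) (Lfun n c d) q p =
    (\<Sum>k=1..n. Lgrad_q n q p a b k * Lgrad_p n q p c d k - Lgrad_p n q p a b k * Lgrad_q n q p c d k)"
  unfolding poisson_def
proof (rule sum.cong)
  fix k assume "k \<in> {1..n}"
  then show "pd1 (Lfun n a b) k q p * pd2 (Lfun n c d) k q p - pd2 (Lfun n a b) k q p * pd1 (Lfun n c d) k q p =
      Lgrad_q n q p a b k * Lgrad_p n q p c d k - Lgrad_p n q p a b k * Lgrad_q n q p c d k"
    using pd_Lfun[OF assms(1-4)] pd_Lfun[OF assms(1,2,5,6)] by simp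
qed simp

lemma poisson_Lfun_ang_ang:
  assumes "dotp n q q > 0" "kepH n q p < 0" "a \<in> {1..n}" "b \<in> {1..n}" "c \<in> {1..n}" "d \<in> {1..n}"
  shows "poisson n (Lfun n a b) (Lfun n c d) q p = Lfun_commutator n q p a b c d"
proof -
  have "poisson n (Lfun n a b) (Lfun n c d) q p =
      (\<Sum>k=1..n. ang_grad_q q p a b k * ang_grad_p q p c d k)
    - (\<Sum>k=1..n. ang_grad_p q p a b k * ang_grad_q q p c d k)"
    using assms by (simp add: poisson_Lfun_eq_grad Lgrad_q_def Lgrad_p_def sum_subtractf)
  also have "\<dots> = Lfun_commutator n q p a b c d"
    unfolding ang_grad_q_def ang_grad_p_def using assms(3-6)
    by (simp only: sum_qp_comb_mult)
      (simp add: Lfun_commutator_def Lfun_def unit_vec_commute algebra_simps)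
  finally show ?thesis .
qed

lemma poisson_Lfun_ang_lenz:
  assumes "dotp n q q > 0" "kepH n q p < 0" "a \<in> {1..n}" "b \<in> {1..n}" "c \<in> {1..n}"
  shows "poisson n (Lfun n a b) (Lfun n c (n + 1)) q p = Lfun_commutator n q p a b c (n + 1)"
proof -
  have Q: "vnorm n q > 0" using vnorm_pos assms(1) .
  have W: "kepW n q p > 0" using kepW_pos assms(2) .
  have "poisson n (Lfun n a b) (Lfun n c (n + 1)) q p =
      (\<Sum>k=1..n. ang_grad_q q p a b k * lenz_grad_p n q p 1 c k)
    - (\<Sum>k=1..n. ang_grad_p q p a b k * lenz_grad_q n q p 1 c k)"
    using assms by (simp add: poisson_Lfun_eq_grad Lgrad_q_def Lgrad_p_def sum_subtractf)
  also have "\<dots> = (unit_vec a c * lenz n q p b - unit_vec b c * lenz n q p a) / kepW n q p"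
    unfolding ang_grad_q_def ang_grad_p_def lenz_grad_q_def lenz_grad_p_def using assms(3-5) Q W
    by (simp only: sum_qp_comb_mult dotp_self_eq_vnorm_sq[of n q] dotp_p_p_eq[OF assms(2)]
        lenz_eq[OF assms(2)] dotp_commute[of n p q] unit_vec_commute[of c])
      (simp add: field_simps)
  also have "\<dots> = Lfun_commutator n q p a b c (n + 1)"
    using assms(3-5) by (simp add: Lfun_commutator_def Lfun_def kepW_def unit_vec_def diff_divide_distrib)
  finally show ?thesis .
qed

lemma poisson_Lfun_lenz_lenz:
  assumes "dotp n q q > 0" "kepH n q p < 0" "a \<in> {1..n}" "c \<in> {1..n}"
  shows "poisson n (Lfun n a (n + 1)) (Lfun n c (n + 1)) q p = Lfun_commutator n q p a (n + 1) c (n + 1)"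
proof -
  have Q: "vnorm n q > 0" using vnorm_pos assms(1) .
  have W: "kepW n q p > 0" using kepW_pos assms(2) .
  have "poisson n (Lfun n a (n + 1)) (Lfun n c (n + 1)) q p =
      (\<Sum>k=1..n. lenz_grad_q n q p 1 a k * lenz_grad_p n q p 1 c k)
    - (\<Sum>k=1..n. lenz_grad_p n q p 1 a k * lenz_grad_q n q p 1 c k)"
    using assms by (simp add: poisson_Lfun_eq_grad Lgrad_q_def Lgrad_p_def sum_subtractf)
  also have "\<dots> = q a * p c - q c * p a"
    unfolding lenz_grad_q_def lenz_grad_p_def using assms(3,4) Q W
    by (simp only: sum_qp_comb_mult dotp_self_eq_vnorm_sq[of n q] dotp_p_p_eq[OF assms(2)]
        lenz_eq[OF assms(2)] dotp_commute[of n p q] unit_vec_commute[of a c])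
      (simp add: field_simps, algebra)
  also have "\<dots> = Lfun_commutator n q p a (n + 1) c (n + 1)"
    using assms(3,4) by (simp add: Lfun_commutator_def Lfun_def unit_vec_def)
  finally show ?thesis .
qed

lemma poisson_swap: "poisson n f g x y = - poisson n g f x y"
  unfolding poisson_def by (simp add: sum_negf[symmetric] algebra_simps)

lemma poisson_Lfun_swap_left:
  assumes "dotp n q q > 0" "kepH n q p < 0" "a \<in> {1..n+1}" "b \<in> {1..n+1}" "c \<in> {1..n+1}" "d \<in> {1..n+1}"
  shows "poisson n (Lfun n b a) (Lfun n c d) q p = - poisson n (Lfun n a b) (Lfun n c d) q p"
  using assms
  by (simp add: poisson_Lfun_eq_grad Lgrad_q_swap[of n q p b a] Lgrad_p_swap[of n q p b a]
      sum_negf[symmetric])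

lemma poisson_Lfun_zero:
  assumes "dotp n q q > 0" "kepH n q p < 0" "c \<in> {1..n+1}" "d \<in> {1..n+1}"
  shows "poisson n (Lfun n (n + 1) (n + 1)) (Lfun n c d) q p = 0"
  using assms by (simp add: poisson_Lfun_eq_grad Lgrad_q_def Lgrad_p_def)

text \<open>By the antisymmetry of both sides, everything reduces to the three cases computed above.\<close>
lemma poisson_Lfun:
  assumes "dotp n q q > 0" "kepH n q p < 0" "a \<in> {1..n+1}" "b \<in> {1..n+1}" "c \<in> {1..n+1}" "d \<in> {1..n+1}"
  shows "poisson n (Lfun n a b) (Lfun n c d) q p = Lfun_commutator n q p a b c d"
proof -
  let ?N = "n + 1"
  let ?P = "\<lambda>a b c d. poisson n (Lfun n a b) (Lfun n c d) q p = Lfun_commutator n q p a b c d"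
  have swap_left: "?P a b c d" if "?P b a c d" "a \<in> {1..?N}" "b \<in> {1..?N}" "c \<in> {1..?N}" "d \<in> {1..?N}"
    for a b c d
    using that poisson_Lfun_swap_left[OF assms(1,2), of b a c d] Lfun_commutator_swap_left[of n q p b a c d]
    by simp
  have swap_pairs: "?P a b c d" if "?P c d a b" for a b c d
    using that poisson_swap[of n "Lfun n a b"] Lfun_commutator_swap_pairs[of n q p c d a b] by simp
  have swap_right: "?P a b c d" if "?P a b d c" "a \<in> {1..?N}" "b \<in> {1..?N}" "c \<in> {1..?N}" "d \<in> {1..?N}"
    for a b c d
    using that swap_left[of d c a b] swap_pairs by blast
  have zero: "?P ?N ?N c d" if "c \<in> {1..?N}" "d \<in> {1..?N}" for c d
    using that poisson_Lfun_zero[OF assms(1,2)] Lfun_commutator_swap_left[of n q p ?N ?N c d] by simp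
  have a_c_le_n: "?P a b c d" if idx: "a \<in> {1..n}" "c \<in> {1..n}" "b \<in> {1..?N}" "d \<in> {1..?N}" for a b c d
  proof -
    consider "b \<in> {1..n}" "d \<in> {1..n}" | "b \<in> {1..n}" "d = ?N" | "b = ?N" "d \<in> {1..n}" | "b = ?N" "d = ?N"
      using idx(3,4) by fastforce
    then show ?thesis
    proof cases
      case 1 with idx show ?thesis by (simp add: poisson_Lfun_ang_ang assms)
    next
      case 2 with idx show ?thesis using poisson_Lfun_ang_lenz[OF assms(1,2), of a b c] by simp
    next
      case 3 with idx show ?thesis using swap_pairs poisson_Lfun_ang_lenz[OF assms(1,2), of c d a] by simp
    next
      case 4 with idx show ?thesis using poisson_Lfun_lenz_lenz[OF assms(1,2), of a c] by simp
    qed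
  qed
  have a_le_n: "?P a b c d" if idx: "a \<in> {1..n}" "b \<in> {1..?N}" "c \<in> {1..?N}" "d \<in> {1..?N}" for a b c d
  proof -
    consider "c \<in> {1..n}" | "d \<in> {1..n}" "c = ?N" | "c = ?N" "d = ?N"
      using idx(3,4) by fastforce
    then show ?thesis
    proof cases
      case 1 with idx show ?thesis using a_c_le_n by blast
    next
      case 2 with idx show ?thesis using a_c_le_n[of a d b c] swap_right by simp
    next
      case 3 with idx show ?thesis using zero swap_pairs by simp
    qed
  qed
  consider "a \<in> {1..n}" | "b \<in> {1..n}" "a = ?N" | "a = ?N" "b = ?N"
    using assms(3,4) by fastforce
  then show ?thesis
  proof cases
    case 1 with assms show ?thesis using a_le_n by blast
  next
    case 2 with assms show ?thesis using a_le_n[of b a c d] swap_left by simp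
  next
    case 3 with assms show ?thesis using zero by simp
  qed
qed

section \<open>Intertwining of the Hamiltonian vector fields\<close>

definition so_act :: "nat \<Rightarrow> nat \<Rightarrow> (nat \<Rightarrow> real) \<Rightarrow> nat \<Rightarrow> real" where
  "so_act i j x = (\<lambda>m. x i * unit_vec j m - x j * unit_vec i m)"

lemma LSuv_along_lenz_flow:
  assumes "dotp n q q > 0" "kepH n q p < 0" "a \<in> {1..n}"
    and dq: "\<And>k. k \<in> {1..n} \<Longrightarrow> dq k = lenz_grad_p n q p \<sigma> a k"
    and dp: "\<And>k. k \<in> {1..n} \<Longrightarrow> dp k = lenz_grad_q n q p (- \<sigma>) a k"
    and m: "m \<in> {1..n+1}"
  shows "d_kepW n q p dq dp = 0"
    and "d_LSu n q p dq dp m = \<sigma> * so_act a (n + 1) (LSu n q p) m - d_LSv n q p dq dp (n + 1) * LSv n q p m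
       \<and> d_LSv n q p dq dp m = \<sigma> * so_act a (n + 1) (LSv n q p) m + d_LSv n q p dq dp (n + 1) * LSu n q p m"
proof -
  have inv: "vnorm n q * inverse (vnorm n q) = 1" "kepW n q p * inverse (kepW n q p) = 1"
    using vnorm_pos[OF assms(1)] kepW_pos[OF assms(2)] by simp_all
  have a_range: "Suc 0 \<le> a" "a \<le> n" "a \<noteq> Suc n" using assms(3) by simp_all
  have dots: "dotp n q dq = dotp n q (lenz_grad_p n q p \<sigma> a)" "dotp n p dq = dotp n p (lenz_grad_p n q p \<sigma> a)"
    "dotp n q dp = dotp n q (lenz_grad_q n q p (- \<sigma>) a)" "dotp n p dp = dotp n p (lenz_grad_q n q p (- \<sigma>) a)"
    by (auto intro!: dotp_cong simp: dq dp)
  note defs = d_LSu_def d_LSv_def d_kepW_def d_vnorm_def d_qp_def so_act_def LSu_def LSv_def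
    kepW_def[symmetric] dots dotp_commute[of n dq p] lenz_grad_p_def lenz_grad_q_def qp_comb_apply
    dotp_qp_comb[OF assms(3) assms(3)]
  (* Keeping the inverses of |q| and \<surd>(-2H) as atoms, related to |q| and \<surd>(-2H) by inv, turns
     each claim into a polynomial identity small enough for algebra; clearing denominators instead
     produces terms of very high degree. *)
  note sub = dotp_self_eq_vnorm_sq[of n q] dotp_p_p_eq[OF assms(2)] lenz_eq[OF assms(2)]
    dotp_commute[of n p q] divide_inverse inverse_mult_distrib power_inverse[symmetric]
  show "d_kepW n q p dq dp = 0"
    unfolding defs by (simp add: sub) (insert inv, algebra)
  consider "m = n + 1" | "m \<in> {1..n}" using m by fastforce
  then show "d_LSu n q p dq dp m = \<sigma> * so_act a (n + 1) (LSu n q p) m - d_LSv n q p dq dp (n + 1) * LSv n q p m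
    \<and> d_LSv n q p dq dp m = \<sigma> * so_act a (n + 1) (LSv n q p) m + d_LSv n q p dq dp (n + 1) * LSu n q p m"
  proof cases
    case 1
    show ?thesis
      unfolding 1 defs by (simp add: a_range unit_vec_other sub) (intro conjI; insert inv, algebra)
  next
    case 2
    then have m_range: "Suc 0 \<le> m" "m \<le> n" "Suc n \<noteq> m" by simp_all
    show ?thesis
      unfolding defs dq[OF 2] dp[OF 2]
      by (simp add: a_range m_range unit_vec_other sub) (intro conjI; insert inv, algebra)
  qed
qed

lemma LSuv_along_ang_flow:
  assumes "dotp n q q > 0" "kepH n q p < 0" "a \<in> {1..n}" "b \<in> {1..n}"
    and dq: "\<And>k. k \<in> {1..n} \<Longrightarrow> dq k = ang_grad_p q p a b k"
    and dp: "\<And>k. k \<in> {1..n} \<Longrightarrow> dp k = - ang_grad_q q p a b k"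
    and m: "m \<in> {1..n+1}"
  shows "d_kepW n q p dq dp = 0"
    and "d_LSu n q p dq dp m = so_act a b (LSu n q p) m - d_LSv n q p dq dp (n + 1) * LSv n q p m
       \<and> d_LSv n q p dq dp m = so_act a b (LSv n q p) m + d_LSv n q p dq dp (n + 1) * LSu n q p m"
proof -
  have dots: "dotp n q dq = 0" "dotp n p dp = 0" "d_qp n q p dq dp = 0"
  proof -
    have "dotp n q dq = dotp n q (ang_grad_p q p a b)" "dotp n p dq = dotp n p (ang_grad_p q p a b)"
      "dotp n q dp = dotp n q (qp_comb 0 0 (- p b) a (p a) b q p)"
      "dotp n p dp = dotp n p (qp_comb 0 0 (- p b) a (p a) b q p)"
      by (auto intro!: dotp_cong simp: dq dp ang_grad_q_def qp_comb_apply)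
    then show "dotp n q dq = 0" "dotp n p dp = 0" "d_qp n q p dq dp = 0"
      using assms(3,4) by (simp_all add: d_qp_def dotp_commute[of n dq p] ang_grad_p_def dotp_qp_comb)
  qed
  show dW: "d_kepW n q p dq dp = 0"
    by (simp add: d_kepW_def d_vnorm_def dots)
  have d\<theta>: "d_LSv n q p dq dp (n + 1) = 0"
    by (simp add: d_LSv_def dW dots)
  have "m = n + 1 \<or> m \<in> {1..n}" using m by auto
  then show "d_LSu n q p dq dp m = so_act a b (LSu n q p) m - d_LSv n q p dq dp (n + 1) * LSv n q p m
    \<and> d_LSv n q p dq dp m = so_act a b (LSv n q p) m + d_LSv n q p dq dp (n + 1) * LSu n q p m"
  proof
    assume "m = n + 1"
    with assms(3,4) show ?thesis
      by (simp add: d\<theta> d_LSu_def d_LSv_def d_vnorm_def dW dots so_act_def unit_vec_other)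
  next
    assume "m \<in> {1..n}"
    with assms(3,4) vnorm_pos[OF assms(1)] show ?thesis
      by (simp add: d\<theta> d_LSu_def d_LSv_def d_vnorm_def dW dots so_act_def LSu_def LSv_def dq dp
          ang_grad_p_def ang_grad_q_def qp_comb_apply kepW_def field_simps power2_eq_square)
  qed
qed

lemma so_act_swap: "so_act j i x m = - so_act i j x m"
  by (simp add: so_act_def)

lemma so_act_lin_comb: "so_act i j (\<lambda>k. a * x k + b * y k) m = a * so_act i j x m + b * so_act i j y m"
  by (simp add: so_act_def algebra_simps)

lemma LSuv_along_hamvf_Lfun:
  assumes "dotp n q q > 0" "kepH n q p < 0" "i \<in> {1..n+1}" "j \<in> {1..n+1}" "m \<in> {1..n+1}"
    and dq: "\<And>k. k \<in> {1..n} \<Longrightarrow> dq k = Lgrad_p n q p i j k"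
    and dp: "\<And>k. k \<in> {1..n} \<Longrightarrow> dp k = - Lgrad_q n q p i j k"
  shows "d_kepW n q p dq dp = 0"
    and "d_LSu n q p dq dp m = so_act i j (LSu n q p) m - d_LSv n q p dq dp (n + 1) * LSv n q p m
       \<and> d_LSv n q p dq dp m = so_act i j (LSv n q p) m + d_LSv n q p dq dp (n + 1) * LSu n q p m"
proof -
  consider "i \<in> {1..n}" "j \<in> {1..n}" | "i \<in> {1..n}" "j = n + 1" | "i = n + 1" "j \<in> {1..n}"
    | "i = n + 1" "j = n + 1"
    using assms(3,4) by fastforce
  then have "d_kepW n q p dq dp = 0 \<and>
       d_LSu n q p dq dp m = so_act i j (LSu n q p) m - d_LSv n q p dq dp (n + 1) * LSv n q p m
     \<and> d_LSv n q p dq dp m = so_act i j (LSv n q p) m + d_LSv n q p dq dp (n + 1) * LSu n q p m"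
  proof cases
    case 1
    then show ?thesis
      using LSuv_along_ang_flow[OF assms(1,2) 1 _ _ assms(5), of dq dp] dq dp
      by (simp add: Lgrad_q_def Lgrad_p_def)
  next
    case 2
    then show ?thesis
      using LSuv_along_lenz_flow[OF assms(1,2) 2(1) _ _ assms(5), of dq 1 dp] dq dp
      by (simp add: Lgrad_q_def Lgrad_p_def lenz_grad_q_neg)
  next
    case 3
    then show ?thesis
      using LSuv_along_lenz_flow[OF assms(1,2) 3(2) _ _ assms(5), of dq "-1" dp] dq dp
        so_act_swap[of "n + 1" j]
      by (simp add: Lgrad_q_def Lgrad_p_def lenz_grad_q_neg[of n q p 1, simplified])
  next
    case 4
    then have zero: "dq k = 0" "dp k = 0" if "k \<in> {1..n}" for k
      using dq[OF that] dp[OF that] by (simp_all add: Lgrad_q_def Lgrad_p_def)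
    then have "dotp n x dq = 0" "dotp n x dp = 0" "dotp n dq x = 0" for x
      by (simp_all add: dotp_def)
    with 4 zero show ?thesis
      by (simp add: d_LSu_def d_LSv_def d_kepW_def d_vnorm_def d_qp_def so_act_def)
  qed
  then show "d_kepW n q p dq dp = 0"
    and "d_LSu n q p dq dp m = so_act i j (LSu n q p) m - d_LSv n q p dq dp (n + 1) * LSv n q p m
       \<and> d_LSv n q p dq dp m = so_act i j (LSv n q p) m + d_LSv n q p dq dp (n + 1) * LSu n q p m"
    by simp_all
qed

lemma DERIV_rotating_frame:
  fixes x y \<theta> :: "real \<Rightarrow> real"
  assumes "(\<theta> has_real_derivative d\<theta>) (at 0)"
    and "(x has_real_derivative A - d\<theta> * y 0) (at 0)"
    and "(y has_real_derivative B + d\<theta> * x 0) (at 0)"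
  shows "((\<lambda>t. cos (\<theta> t) * x t + sin (\<theta> t) * y t) has_real_derivative
      cos (\<theta> 0) * A + sin (\<theta> 0) * B) (at 0)"
    and "((\<lambda>t. - sin (\<theta> t) * x t + cos (\<theta> t) * y t) has_real_derivative
      - sin (\<theta> 0) * A + cos (\<theta> 0) * B) (at 0)"
proof -
  have cos: "((\<lambda>t. cos (\<theta> t)) has_real_derivative - sin (\<theta> 0) * d\<theta>) (at 0)"
    and sin: "((\<lambda>t. sin (\<theta> t)) has_real_derivative cos (\<theta> 0) * d\<theta>) (at 0)"
    using DERIV_chain2[OF DERIV_cos assms(1)] DERIV_chain2[OF DERIV_sin assms(1)] by simp_all
  show "((\<lambda>t. cos (\<theta> t) * x t + sin (\<theta> t) * y t) has_real_derivative
      cos (\<theta> 0) * A + sin (\<theta> 0) * B) (at 0)"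
    by (rule DERIV_cong[OF DERIV_add[OF DERIV_mult[OF cos assms(2)] DERIV_mult[OF sin assms(3)]]])
      (simp add: algebra_simps)
  show "((\<lambda>t. - sin (\<theta> t) * x t + cos (\<theta> t) * y t) has_real_derivative
      - sin (\<theta> 0) * A + cos (\<theta> 0) * B) (at 0)"
    by (rule DERIV_cong[OF DERIV_add[OF DERIV_mult[OF DERIV_minus[OF sin] assms(2)] DERIV_mult[OF cos assms(3)]]])
      (simp add: algebra_simps)
qed

lemma pd_Mfun:
  shows "pd1 (Mfun i j) m r s = unit_vec i m * s j - unit_vec j m * s i"
    and "pd2 (Mfun i j) m r s = r i * unit_vec j m - r j * unit_vec i m"
proof -
  have "((\<lambda>t. Mfun i j (line r (unit_vec m) t) (line s (\<lambda>_. 0) t)) has_real_derivative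
      unit_vec m i * s j - unit_vec m j * s i) (at 0)"
    "((\<lambda>t. Mfun i j (line r (\<lambda>_. 0) t) (line s (unit_vec m) t)) has_real_derivative
      r i * unit_vec m j - r j * unit_vec m i) (at 0)"
    unfolding Mfun_def line_def by (auto intro!: derivative_eq_intros)
  then show "pd1 (Mfun i j) m r s = unit_vec i m * s j - unit_vec j m * s i"
    and "pd2 (Mfun i j) m r s = r i * unit_vec j m - r j * unit_vec i m"
    by (simp_all add: pd1_eq_deriv_line pd2_eq_deriv_line DERIV_imp_deriv unit_vec_commute)
qed

lemma hamvf_Mfun:
  assumes "m \<in> {1..N}"
  shows "fst (hamvf N (Mfun i j) r s) m = so_act i j r m"
    and "snd (hamvf N (Mfun i j) r s) m = so_act i j s m"
  using assms by (simp_all add: hamvf_def pd_Mfun so_act_def)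

lemma hamvf_Lfun:
  assumes "dotp n q q > 0" "kepH n q p < 0" "i \<in> {1..n+1}" "j \<in> {1..n+1}" "k \<in> {1..n}"
  shows "fst (hamvf n (Lfun n i j) q p) k = Lgrad_p n q p i j k"
    and "snd (hamvf n (Lfun n i j) q p) k = - Lgrad_q n q p i j k"
  using assms(5) by (simp_all add: hamvf_def pd_Lfun[OF assms])

lemma LSmap_intertwines_hamvf:
  assumes "(q, p) \<in> Pminus n" "i \<in> {1..n+1}" "j \<in> {1..n+1}" "m \<in> {1..n+1}"
  defines "dq \<equiv> fst (hamvf n (Lfun n i j) q p)" and "dp \<equiv> snd (hamvf n (Lfun n i j) q p)"
  shows "((\<lambda>t. fst (LSmap n (line q dq t) (line p dp t)) m) has_real_derivative
      so_act i j (fst (LSmap n q p)) m) (at 0)"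
    and "((\<lambda>t. snd (LSmap n (line q dq t) (line p dp t)) m) has_real_derivative
      so_act i j (snd (LSmap n q p)) m) (at 0)"
proof -
  note pm = Pminus_D[OF assms(1)]
  let ?\<theta> = "LSv n q p (n + 1)"
  have flow: "d_kepW n q p dq dp = 0"
    "d_LSu n q p dq dp m = so_act i j (LSu n q p) m - d_LSv n q p dq dp (n + 1) * LSv n q p m
     \<and> d_LSv n q p dq dp m = so_act i j (LSv n q p) m + d_LSv n q p dq dp (n + 1) * LSu n q p m"
    using LSuv_along_hamvf_Lfun[OF pm assms(2-4)] hamvf_Lfun[OF pm assms(2,3)] by (simp_all add: dq_def dp_def)
  have du: "((\<lambda>t. LSu n (line q dq t) (line p dp t) m) has_real_derivative
      so_act i j (LSu n q p) m - d_LSv n q p dq dp (n + 1) * LSv n q p m) (at 0)"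
    and dv: "((\<lambda>t. LSv n (line q dq t) (line p dp t) m) has_real_derivative
      so_act i j (LSv n q p) m + d_LSv n q p dq dp (n + 1) * LSu n q p m) (at 0)"
    using DERIV_LSu_line[OF pm, of dq dp m] DERIV_LSv_line[OF pm, of dq dp m] flow(2) by simp_all
  note rot = DERIV_rotating_frame[where \<theta> = "\<lambda>t. LSv n (line q dq t) (line p dp t) (n + 1)"
      and x = "\<lambda>t. LSu n (line q dq t) (line p dp t) m" and y = "\<lambda>t. LSv n (line q dq t) (line p dp t) m",
      unfolded line_0, OF DERIV_LSv_line[OF pm] du dv]
  show "((\<lambda>t. fst (LSmap n (line q dq t) (line p dp t)) m) has_real_derivative
      so_act i j (fst (LSmap n q p)) m) (at 0)"
    using rot(1) by (simp add: LSmap_fst so_act_lin_comb)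
  have snd_eq: "snd (LSmap n x y) m = (- sin (LSv n x y (n + 1)) * LSu n x y m
      + cos (LSv n x y (n + 1)) * LSv n x y m) / kepW n x y" for x y
    by (simp add: LSmap_def Let_def kepW_def)
  have W: "kepW n q p \<noteq> 0" using kepW_pos[OF pm(2)] by simp
  have so_act_snd: "so_act i j (snd (LSmap n q p)) m =
      (- sin ?\<theta> * so_act i j (LSu n q p) m + cos ?\<theta> * so_act i j (LSv n q p) m) / kepW n q p"
    unfolding LSmap_snd so_act_lin_comb using W by (simp add: field_simps)
  have "((\<lambda>t. snd (LSmap n (line q dq t) (line p dp t)) m) has_real_derivative
      ((- sin ?\<theta> * so_act i j (LSu n q p) m + cos ?\<theta> * so_act i j (LSv n q p) m) * kepW n q p
        - (- sin ?\<theta> * LSu n q p m + cos ?\<theta> * LSv n q p m) * d_kepW n q p dq dp)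
      / (kepW n q p * kepW n q p)) (at 0)"
    unfolding snd_eq using DERIV_divide[OF rot(2) DERIV_kepW_line[OF pm, of dq dp]] W by simp
  then show "((\<lambda>t. snd (LSmap n (line q dq t) (line p dp t)) m) has_real_derivative
      so_act i j (snd (LSmap n q p)) m) (at 0)"
    unfolding so_act_snd flow(1) by (rule DERIV_cong) (simp add: W)
qed

lemma Lfun_commutator_cyclic:
  assumes "i \<noteq> j" "j \<noteq> k" "i \<noteq> k"
  shows "Lfun_commutator n q p i j j k = Lfun n k i q p"
  using assms by (simp add: Lfun_commutator_def unit_vec_other Lfun_diag Lfun_swap[of n i k])

lemma Lfun_commutator_eq_0: "card {a, b, c, d} \<noteq> 3 \<Longrightarrow> Lfun_commutator n q p a b c d = 0"
  by (cases "a = b"; cases "a = c"; cases "a = d"; cases "b = c"; cases "b = d"; cases "c = d")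
    (simp_all add: Lfun_commutator_def unit_vec_def Lfun_diag card_insert_if)

theorem theorem4p1:
  fixes n :: nat
  assumes "n \<ge> 1"
  shows
    "(\<forall>(q, p)\<in>Pminus n. LSmap n q p \<in> Tminus n)
   \<and> (\<forall>(q, p)\<in>Pminus n. \<forall>i\<in>{1..n+1}. \<forall>j\<in>{1..n+1}.
        Mfun i j (fst (LSmap n q p)) (snd (LSmap n q p)) = Lfun n i j q p)
   \<and> (\<forall>(q, p)\<in>Pminus n. \<forall>i\<in>{1..n+1}. \<forall>j\<in>{1..n+1}. \<forall>k\<in>{1..n+1}.
        i \<noteq> j \<and> j \<noteq> k \<and> i \<noteq> k \<longrightarrow>
        poisson n (Lfun n i j) (Lfun n j k) q p = Lfun n k i q p)
   \<and> (\<forall>(q, p)\<in>Pminus n. \<forall>i\<in>{1..n+1}. \<forall>j\<in>{1..n+1}. \<forall>k\<in>{1..n+1}. \<forall>l\<in>{1..n+1}.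
        card {i, j, k, l} \<noteq> 3 \<longrightarrow>
        poisson n (Lfun n i j) (Lfun n k l) q p = 0)
   \<and> (\<forall>(q, p)\<in>Pminus n. \<forall>i\<in>{1..n+1}. \<forall>j\<in>{1..n+1}. \<forall>m\<in>{1..n+1}.
        (let X = hamvf n (Lfun n i j) q p;
             Y = hamvf (n + 1) (Mfun i j) (fst (LSmap n q p)) (snd (LSmap n q p)) in
         ((\<lambda>t. fst (LSmap n (\<lambda>a. q a + t * fst X a) (\<lambda>a. p a + t * snd X a)) m)
              has_real_derivative fst Y m) (at 0)
         \<and> ((\<lambda>t. snd (LSmap n (\<lambda>a. q a + t * fst X a) (\<lambda>a. p a + t * snd X a)) m)
              has_real_derivative snd Y m) (at 0)))"
proof (intro conjI)
  show "\<forall>(q, p)\<in>Pminus n. LSmap n q p \<in> Tminus n"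
    using LSmap_in_Tminus by blast
  show "\<forall>(q, p)\<in>Pminus n. \<forall>i\<in>{1..n+1}. \<forall>j\<in>{1..n+1}.
      Mfun i j (fst (LSmap n q p)) (snd (LSmap n q p)) = Lfun n i j q p"
    using Mfun_LSmap_eq_Lfun by blast
  show "\<forall>(q, p)\<in>Pminus n. \<forall>i\<in>{1..n+1}. \<forall>j\<in>{1..n+1}. \<forall>k\<in>{1..n+1}.
      i \<noteq> j \<and> j \<noteq> k \<and> i \<noteq> k \<longrightarrow> poisson n (Lfun n i j) (Lfun n j k) q p = Lfun n k i q p"
    by (auto simp: poisson_Lfun Pminus_D Lfun_commutator_cyclic)
  show "\<forall>(q, p)\<in>Pminus n. \<forall>i\<in>{1..n+1}. \<forall>j\<in>{1..n+1}. \<forall>k\<in>{1..n+1}. \<forall>l\<in>{1..n+1}.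
      card {i, j, k, l} \<noteq> 3 \<longrightarrow> poisson n (Lfun n i j) (Lfun n k l) q p = 0"
    by (auto simp: poisson_Lfun Pminus_D Lfun_commutator_eq_0)
  show "\<forall>(q, p)\<in>Pminus n. \<forall>i\<in>{1..n+1}. \<forall>j\<in>{1..n+1}. \<forall>m\<in>{1..n+1}.
      (let X = hamvf n (Lfun n i j) q p;
           Y = hamvf (n + 1) (Mfun i j) (fst (LSmap n q p)) (snd (LSmap n q p)) in
       ((\<lambda>t. fst (LSmap n (\<lambda>a. q a + t * fst X a) (\<lambda>a. p a + t * snd X a)) m)
            has_real_derivative fst Y m) (at 0)
       \<and> ((\<lambda>t. snd (LSmap n (\<lambda>a. q a + t * fst X a) (\<lambda>a. p a + t * snd X a)) m)
            has_real_derivative snd Y m) (at 0))"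
    unfolding Let_def line_def[symmetric]
    by (auto simp: hamvf_Mfun intro!: LSmap_intertwines_hamvf)
qed

end
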